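(* Consider the following kinetic transport model. Let $\{Z_k\}_{k\ge1}$ be a Markov chain on the two states $\{\mathrm{F},\mathrm{A}\}$ with initial distribution $\lambda=(\lambda_{\mathrm F},\lambda_{\mathrm A})$ and transition matrix $$\begin{pmatrix}1-a & a\\ b & 1-b\end{pmatrix}$$ (rows and columns indexed by $\mathrm F,\mathrm A$), $a,b\in[0,1]$. Let $K_n=\sum_{k=1}^n \mathbf 1_{\{Z_k=\mathrm F\}}$. Independently of $\{Z_k\}$, let $(X_k,Y_k)_{k\ge1}$ be i.i.d. with $$P((X_k,Y_k)=(1,j))=\alpha,\qquad P((X_k,Y_k)=(-1,j))=\beta\qquad (j=\pm1),$$ where $\alpha,\beta\ge0$, $\alpha+\beta=1/2$. Let $\tilde S(n)=(\tilde S_X(n),\tilde S_Y(n))=\sum_{k=1}^{K_n}(X_k+1,Y_k)$ and $n\ge1$. Then the conditional variance $\operatorname{Var}(\tilde S_Y(n)\mid \tilde S_X(n)=2x)$ is an increasing (non-decreasing) function of $x\in\{0,1,\dots,n\}$.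
   Context: Conditional variances are considered for conditioning events of positive probability. *)

theory Defs
  imports "HOL-Probability.Probability"
begin

text \<open>States of the chain: True = F, False = A.
  Path of the chain for steps 2..m+1, given the current state s.
  From F the next state is F with prob 1-a; from A it is F with prob b.\<close>
fun mc_from :: "real \<Rightarrow> real \<Rightarrow> nat \<Rightarrow> bool \<Rightarrow> bool list pmf" where
  "mc_from a b 0 s = return_pmf []"
| "mc_from a b (Suc m) s =
     do { s' \<leftarrow> bernoulli_pmf (if s then 1 - a else b);
          rest \<leftarrow> mc_from a b m s';
          return_pmf (s' # rest) }"

definition markov_path :: "real \<Rightarrow> real \<Rightarrow> real \<Rightarrow> nat \<Rightarrow> bool list pmf" where
  "markov_path lF a b n =
     (if n = 0 then return_pmf []
      else do { z1 \<leftarrow> bernoulli_pmf lF;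
                rest \<leftarrow> mc_from a b (n - 1) z1;
                return_pmf (z1 # rest) })"

definition xy_pmf :: "real \<Rightarrow> real \<Rightarrow> (int \<times> int) pmf" where
  "xy_pmf \<alpha> \<beta> = embed_pmf (\<lambda>(x, y).
      if y = 1 \<or> y = -1 then (if x = 1 then \<alpha> else if x = -1 then \<beta> else 0) else 0)"

text \<open>Joint law of (Z_1..Z_n) and the independent iid sequence (X_k,Y_k)_{k\<le>n}
  (only the first K_n \<le> n steps are ever used).\<close>
definition model :: "real \<Rightarrow> real \<Rightarrow> real \<Rightarrow> real \<Rightarrow> real \<Rightarrow> nat
    \<Rightarrow> (bool list \<times> (int \<times> int) list) pmf" where
  "model lF a b \<alpha> \<beta> n = pair_pmf (markov_path lF a b n) (replicate_pmf n (xy_pmf \<alpha> \<beta>))"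

definition K_n :: "bool list \<Rightarrow> nat" where
  "K_n zs = length (filter id zs)"

definition SX :: "bool list \<times> (int \<times> int) list \<Rightarrow> int" where
  "SX \<omega> = sum_list (map (\<lambda>(x, y). x + 1) (take (K_n (fst \<omega>)) (snd \<omega>)))"

definition SY :: "bool list \<times> (int \<times> int) list \<Rightarrow> int" where
  "SY \<omega> = sum_list (map (\<lambda>(x, y). y) (take (K_n (fst \<omega>)) (snd \<omega>)))"

definition cond_var_SY :: "real \<Rightarrow> real \<Rightarrow> real \<Rightarrow> real \<Rightarrow> real \<Rightarrow> nat \<Rightarrow> nat \<Rightarrow> real" where
  "cond_var_SY lF a b \<alpha> \<beta> n x =
     measure_pmf.variance (cond_pmf (model lF a b \<alpha> \<beta> n) {\<omega>. SX \<omega> = 2 * int x})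
       (\<lambda>\<omega>. real_of_int (SY \<omega>))"

end

theory Submission
  imports Defs
begin

text \<open>Given \<open>K\<^sub>n = k\<close>, only the first \<open>k\<close> i.i.d. steps matter: \<open>S\<^sub>X/2\<close> is binomial with
  parameters \<open>k\<close> and \<open>2\<alpha>\<close>, and \<open>S\<^sub>Y\<close> is a sum of \<open>k\<close> symmetric signs independent of the
  \<open>X\<close>'s. So given \<open>K\<^sub>n = k\<close> and \<open>S\<^sub>X = 2x\<close>, \<open>S\<^sub>Y\<close> has mean \<open>0\<close> and second moment \<open>k\<close>, whence
  \<open>Var(S\<^sub>Y | S\<^sub>X = 2x) = E(K\<^sub>n | S\<^sub>X = 2x)\<close>: the mean of the posterior of \<open>K\<^sub>n\<close>, whose weights
  are \<open>P(K\<^sub>n = k) (k choose x) (2\<alpha>)\<^sup>x (2\<beta>)\<^sup>k\<^sup>-\<^sup>x\<close>. The binomial kernel is totally positive of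
  order 2 in \<open>(k, x)\<close>, so these posteriors increase in the likelihood ratio order with \<open>x\<close>,
  and so do their means.\<close>

abbreviation E :: "'a pmf \<Rightarrow> ('a \<Rightarrow> real) \<Rightarrow> real" where
  "E p f \<equiv> measure_pmf.expectation p f"

lemma expectation_pmf_finite:
  assumes "finite (set_pmf p)"
  shows "E p f = (\<Sum>x\<in>set_pmf p. pmf p x * f x)"
  using integral_measure_pmf[OF assms, of p f] by simp

lemma expectation_bind_pmf_finite:
  assumes fp: "finite (set_pmf p)" and ff: "\<And>x. x \<in> set_pmf p \<Longrightarrow> finite (set_pmf (f x))"
  shows "E (bind_pmf p f) g = E p (\<lambda>x. E (f x) g)"
proof -
  define S where "S = (\<Union>x\<in>set_pmf p. set_pmf (f x))"
  have fS: "finite S" using fp ff unfolding S_def by auto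
  have "E (bind_pmf p f) g = (\<Sum>y\<in>S. pmf (bind_pmf p f) y * g y)"
    using expectation_pmf_finite[of "bind_pmf p f" g] fS by (simp add: S_def set_bind_pmf)
  also have "\<dots> = (\<Sum>y\<in>S. (\<Sum>x\<in>set_pmf p. pmf p x * pmf (f x) y) * g y)"
    by (intro sum.cong refl) (simp add: pmf_bind expectation_pmf_finite[OF fp])
  also have "\<dots> = (\<Sum>x\<in>set_pmf p. pmf p x * (\<Sum>y\<in>S. pmf (f x) y * g y))"
    by (simp add: sum_distrib_left sum_distrib_right mult.assoc sum.swap[of _ S])
  also have "\<dots> = (\<Sum>x\<in>set_pmf p. pmf p x * E (f x) g)"
  proof (intro sum.cong refl)
    fix x assume x: "x \<in> set_pmf p"
    have "E (f x) g = (\<Sum>y\<in>S. pmf (f x) y *\<^sub>R g y)"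
      by (rule integral_measure_pmf[OF fS]) (use x in \<open>auto simp: S_def\<close>)
    then show "pmf p x * (\<Sum>y\<in>S. pmf (f x) y * g y) = pmf p x * E (f x) g" by simp
  qed
  also have "\<dots> = E p (\<lambda>x. E (f x) g)" using expectation_pmf_finite[OF fp] by simp
  finally show ?thesis .
qed

lemma expectation_pair_pmf_finite:
  assumes "finite (set_pmf p)" "finite (set_pmf q)"
  shows "E (pair_pmf p q) f = (\<Sum>x\<in>set_pmf p. pmf p x * E q (\<lambda>y. f (x, y)))"
  unfolding pair_pmf_def
  by (simp add: expectation_bind_pmf_finite assms expectation_pmf_finite[OF assms(1)])

lemma expectation_cond_pmf_finite:
  assumes fin: "finite (set_pmf p)" and ne: "set_pmf p \<inter> s \<noteq> {}"
  shows "E (cond_pmf p s) f = E p (\<lambda>\<omega>. f \<omega> * indicator s \<omega>) / measure_pmf.prob p s"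
proof -
  have "E (cond_pmf p s) f = (\<Sum>a\<in>set_pmf p. pmf (cond_pmf p s) a *\<^sub>R f a)"
    by (rule integral_measure_pmf[OF fin]) (use ne in auto)
  also have "\<dots> = (\<Sum>a\<in>set_pmf p. pmf p a * (f a * indicator s a)) / measure_pmf.prob p s"
    by (auto simp: pmf_cond[OF ne] sum_divide_distrib indicator_def intro!: sum.cong)
  also have "\<dots> = E p (\<lambda>\<omega>. f \<omega> * indicator s \<omega>) / measure_pmf.prob p s"
    by (simp add: expectation_pmf_finite[OF fin])
  finally show ?thesis .
qed

lemma choose_mult_choose_le:
  fixes x y l k :: nat
  assumes "x \<le> y" "y \<le> l" "l \<le> k"
  shows "(l choose y) * (k choose x) \<le> (l choose x) * (k choose y)"
  using assms(3)
proof (induction k rule: dec_induct)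
  case base then show ?case by (simp add: mult.commute)
next
  case (step k)
  define a where "a = Suc k - x"
  define b where "b = Suc k - y"
  have ba: "b \<le> a" and b0: "0 < b" using assms step by (auto simp: a_def b_def)
  have ea: "a * (Suc k choose x) = Suc k * (k choose x)"
    using binomial_absorb_comp[of "Suc k" x] by (simp add: a_def)
  have eb: "b * (Suc k choose y) = Suc k * (k choose y)"
    using binomial_absorb_comp[of "Suc k" y] by (simp add: b_def)
  have "(a * b) * ((l choose y) * (Suc k choose x)) = b * Suc k * ((l choose y) * (k choose x))"
    using ea by (metis mult.assoc mult.left_commute)
  also have "\<dots> \<le> b * Suc k * ((l choose x) * (k choose y))"
    using step.IH by simp
  also have "\<dots> \<le> a * Suc k * ((l choose x) * (k choose y))"
    using mult_le_mono1[OF ba, of "Suc k"] by (rule mult_right_mono) simp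
  also have "\<dots> = (a * b) * ((l choose x) * (Suc k choose y))"
    using eb by (metis mult.assoc mult.left_commute)
  finally show ?case using b0 ba by (simp add: mult_le_cancel1)
qed

definition binom_weight :: "real \<Rightarrow> real \<Rightarrow> nat \<Rightarrow> nat \<Rightarrow> real" where
  "binom_weight p q k x = real (k choose x) * p ^ x * q ^ (k - x)"

lemma binom_weight_nonneg: "0 \<le> p \<Longrightarrow> 0 \<le> q \<Longrightarrow> 0 \<le> binom_weight p q k x"
  by (simp add: binom_weight_def)

lemma binom_weight_Suc_0: "binom_weight p q (Suc k) 0 = q * binom_weight p q k 0"
  by (simp add: binom_weight_def)

lemma binom_weight_Suc_Suc:
  "binom_weight p q (Suc k) (Suc x) = p * binom_weight p q k x + q * binom_weight p q k (Suc x)"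
proof (cases "Suc x \<le> k")
  case True
  then have "Suc k - Suc x = Suc (k - Suc x)" "k - x = Suc (k - Suc x)" by auto
  then show ?thesis unfolding binom_weight_def by (simp add: algebra_simps)
next
  case False
  then show ?thesis unfolding binom_weight_def by (simp add: algebra_simps)
qed

lemma binom_weight_TP2:
  assumes pq: "0 \<le> p" "0 \<le> q" and "l \<le> k" "x \<le> y"
  shows "binom_weight p q l y * binom_weight p q k x \<le> binom_weight p q l x * binom_weight p q k y"
proof (cases "y \<le> l")
  case False
  then have "binom_weight p q l y = 0" by (simp add: binom_weight_def)
  then show ?thesis using binom_weight_nonneg[OF pq] by simp
next
  case True
  have exps: "(l - y) + (k - x) = (l - x) + (k - y)" using True assms by simp
  have choose: "real ((l choose y) * (k choose x)) \<le> real ((l choose x) * (k choose y))"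
    using choose_mult_choose_le[OF assms(4) True assms(3)] by linarith
  have "binom_weight p q l y * binom_weight p q k x
      = real ((l choose y) * (k choose x)) * (p ^ (x + y) * q ^ ((l - y) + (k - x)))"
    by (simp add: binom_weight_def power_add algebra_simps)
  also have "\<dots> = real ((l choose y) * (k choose x)) * (p ^ (x + y) * q ^ ((l - x) + (k - y)))"
    by (simp only: exps)
  also have "\<dots> \<le> real ((l choose x) * (k choose y)) * (p ^ (x + y) * q ^ ((l - x) + (k - y)))"
    using choose pq by (intro mult_right_mono) simp_all
  also have "\<dots> = binom_weight p q l x * binom_weight p q k y"
    by (simp add: binom_weight_def power_add algebra_simps)
  finally show ?thesis .
qed

text \<open>Symmetrising the cross-multiplied difference over pairs \<open>(z, w)\<close> makes every summand
  a product of two factors of the same sign.\<close>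

lemma posterior_mean_mono:
  fixes p :: "'c \<Rightarrow> real" and K :: "'c \<Rightarrow> nat" and B :: "nat \<Rightarrow> nat \<Rightarrow> real"
  assumes p_nonneg: "\<And>z. z \<in> S \<Longrightarrow> 0 \<le> p z"
    and TP2: "\<And>l k. l \<le> k \<Longrightarrow> B l y * B k x \<le> B l x * B k y"
    and pos_x: "(\<Sum>z\<in>S. p z * B (K z) x) > 0" and pos_y: "(\<Sum>z\<in>S. p z * B (K z) y) > 0"
  shows "(\<Sum>z\<in>S. p z * (real (K z) * B (K z) x)) / (\<Sum>z\<in>S. p z * B (K z) x)
       \<le> (\<Sum>z\<in>S. p z * (real (K z) * B (K z) y)) / (\<Sum>z\<in>S. p z * B (K z) y)"
proof -
  define Nx where "Nx = (\<Sum>z\<in>S. p z * (real (K z) * B (K z) x))"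
  define Ny where "Ny = (\<Sum>z\<in>S. p z * (real (K z) * B (K z) y))"
  define Dx where "Dx = (\<Sum>z\<in>S. p z * B (K z) x)"
  define Dy where "Dy = (\<Sum>z\<in>S. p z * B (K z) y)"
  define F where "F z w = p z * (real (K z) * B (K z) y) * (p w * B (K w) x)
                        - p w * (real (K w) * B (K w) x) * (p z * B (K z) y)" for z w
  have sign: "0 \<le> (real k - real l) * (B k y * B l x - B l y * B k x)" for k l
    using TP2[of l k] TP2[of k l]
    by (cases "l \<le> k") (auto intro: mult_nonneg_nonneg mult_nonpos_nonpos simp: mult.commute)
  have diff: "Ny * Dx - Nx * Dy = (\<Sum>z\<in>S. \<Sum>w\<in>S. F z w)"
  proof -
    have "Ny * Dx = (\<Sum>z\<in>S. \<Sum>w\<in>S. p z * (real (K z) * B (K z) y) * (p w * B (K w) x))"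
      unfolding Ny_def Dx_def by (rule sum_product)
    moreover have "Nx * Dy = (\<Sum>z\<in>S. \<Sum>w\<in>S. p w * (real (K w) * B (K w) x) * (p z * B (K z) y))"
      unfolding Nx_def Dy_def by (subst sum_product) (rule sum.swap)
    ultimately show ?thesis by (simp add: F_def sum_subtractf)
  qed
  also have "\<dots> = (\<Sum>z\<in>S. \<Sum>w\<in>S. F w z)" by (rule sum.swap)
  finally have diff': "Ny * Dx - Nx * Dy = (\<Sum>z\<in>S. \<Sum>w\<in>S. F w z)" .
  have "2 * (Ny * Dx - Nx * Dy) = (\<Sum>z\<in>S. \<Sum>w\<in>S. F z w) + (\<Sum>z\<in>S. \<Sum>w\<in>S. F w z)"
    by (simp only: diff[symmetric] diff'[symmetric]) simp
  also have "\<dots> = (\<Sum>z\<in>S. \<Sum>w\<in>S. F z w + F w z)"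
    by (simp add: sum.distrib)
  also have "\<dots> = (\<Sum>z\<in>S. \<Sum>w\<in>S. (p z * p w) *
      ((real (K z) - real (K w)) * (B (K z) y * B (K w) x - B (K w) y * B (K z) x)))"
    by (intro sum.cong refl) (simp add: F_def algebra_simps)
  also have "\<dots> \<ge> 0"
    by (intro sum_nonneg mult_nonneg_nonneg[OF mult_nonneg_nonneg sign]) (simp_all add: p_nonneg)
  finally have "Nx * Dy \<le> Ny * Dx" by simp
  then show ?thesis
    using pos_x pos_y unfolding Nx_def[symmetric] Ny_def[symmetric] Dx_def[symmetric] Dy_def[symmetric]
    by (simp add: divide_simps mult.commute)
qed

lemma length_mc_from: "zs \<in> set_pmf (mc_from a b m s) \<Longrightarrow> length zs = m"
  by (induction m arbitrary: s zs) (auto simp: set_bind_pmf split: if_splits)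

lemma length_markov_path: "z \<in> set_pmf (markov_path lF a b n) \<Longrightarrow> length z = n"
  by (auto simp: markov_path_def set_bind_pmf split: if_splits dest!: length_mc_from)

lemma finite_set_markov_path: "finite (set_pmf (markov_path lF a b n))"
proof -
  have "finite {xs :: bool list. set xs \<subseteq> UNIV \<and> length xs = n}"
    by (rule finite_lists_length_eq) simp
  then show ?thesis by (rule finite_subset[rotated]) (auto dest: length_markov_path)
qed

locale step_law =
  fixes \<alpha> \<beta> :: real
  assumes \<alpha>_nonneg: "\<alpha> \<ge> 0" and \<beta>_nonneg: "\<beta> \<ge> 0" and \<alpha>\<beta>_sum: "\<alpha> + \<beta> = 1/2"
begin

abbreviation R :: "nat \<Rightarrow> (int \<times> int) list pmf" where
  "R k \<equiv> replicate_pmf k (xy_pmf \<alpha> \<beta>)"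

definition steps :: "(int \<times> int) set" where
  "steps = {(1, 1), (1, -1), (-1, 1), (-1, -1)}"

definition xy_density :: "int \<times> int \<Rightarrow> real" where
  "xy_density = (\<lambda>(x, y). if y = 1 \<or> y = -1 then (if x = 1 then \<alpha> else if x = -1 then \<beta> else 0) else 0)"

lemma xy_density_nonneg: "0 \<le> xy_density z"
  using \<alpha>_nonneg \<beta>_nonneg by (auto simp: xy_density_def split: prod.splits)

lemma nn_integral_xy_density: "(\<integral>\<^sup>+z. ennreal (xy_density z) \<partial>count_space UNIV) = 1"
proof -
  have "(\<integral>\<^sup>+z. ennreal (xy_density z) \<partial>count_space UNIV) = (\<Sum>z\<in>steps. ennreal (xy_density z))"
    by (rule nn_integral_count_space') (auto simp: steps_def xy_density_def split: if_splits)
  also have "\<dots> = ennreal (\<Sum>z\<in>steps. xy_density z)"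
    using xy_density_nonneg by (simp add: sum_ennreal)
  also have "(\<Sum>z\<in>steps. xy_density z) = 1"
    using \<alpha>\<beta>_sum by (simp add: steps_def xy_density_def)
  finally show ?thesis by simp
qed

lemma pmf_xy_pmf: "pmf (xy_pmf \<alpha> \<beta>) z = xy_density z"
  unfolding xy_pmf_def xy_density_def[symmetric]
  by (rule pmf_embed_pmf[OF xy_density_nonneg nn_integral_xy_density])

lemma set_xy_pmf_subset: "set_pmf (xy_pmf \<alpha> \<beta>) \<subseteq> steps"
  by (auto simp: set_pmf_iff pmf_xy_pmf xy_density_def steps_def split: if_splits)

lemma finite_set_xy_pmf: "finite (set_pmf (xy_pmf \<alpha> \<beta>))"
  using set_xy_pmf_subset by (rule finite_subset) (simp add: steps_def)

lemma expectation_xy_pmf: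
  "E (xy_pmf \<alpha> \<beta>) g = \<alpha> * (g (1, 1) + g (1, -1)) + \<beta> * (g (-1, 1) + g (-1, -1))"
proof -
  have "E (xy_pmf \<alpha> \<beta>) g = (\<Sum>z\<in>steps. pmf (xy_pmf \<alpha> \<beta>) z *\<^sub>R g z)"
    by (rule integral_measure_pmf) (use set_xy_pmf_subset in \<open>auto simp: steps_def\<close>)
  then show ?thesis by (simp add: steps_def pmf_xy_pmf xy_density_def algebra_simps)
qed

lemma finite_set_R: "finite (set_pmf (R k))"
proof -
  have "set_pmf (R k) \<subseteq> {xs. set xs \<subseteq> steps \<and> length xs = k}"
    using set_xy_pmf_subset by (auto simp: set_replicate_pmf)
  moreover have "finite {xs. set xs \<subseteq> steps \<and> length xs = k}"
    by (rule finite_lists_length_eq) (simp add: steps_def)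
  ultimately show ?thesis by (rule finite_subset)
qed

lemma integrable_R [simp]: "integrable (measure_pmf (R k)) (f :: _ \<Rightarrow> real)"
  by (rule integrable_measure_pmf_finite[OF finite_set_R])

lemma expectation_R_Suc: "E (R (Suc k)) g = E (xy_pmf \<alpha> \<beta>) (\<lambda>w. E (R k) (\<lambda>v. g (w # v)))"
  by (simp add: expectation_bind_pmf_finite finite_set_xy_pmf finite_set_R)

lemma expectation_R_take: "k \<le> n \<Longrightarrow> E (R n) (\<lambda>w. g (take k w)) = E (R k) g"
proof (induction k arbitrary: n g)
  case 0
  then show ?case by simp
next
  case (Suc k n g)
  then obtain n' where n: "n = Suc n'" "k \<le> n'" by (cases n) auto
  have "E (R n') (\<lambda>v. g (w # take k v)) = E (R k) (\<lambda>v. g (w # v))" for w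
    using Suc.IH[OF n(2), where g = "\<lambda>u. g (w # u)"] by simp
  then show ?case unfolding n expectation_R_Suc by simp
qed

definition sx :: "(int \<times> int) list \<Rightarrow> int" where
  "sx v = sum_list (map (\<lambda>(x, y). x + 1) v)"

definition sy :: "(int \<times> int) list \<Rightarrow> int" where
  "sy v = sum_list (map (\<lambda>(x, y). y) v)"

lemma sx_simps [simp]: "sx [] = 0" "sx ((x, y) # v) = x + 1 + sx v"
  by (simp_all add: sx_def)

lemma sy_simps [simp]: "sy [] = 0" "sy ((x, y) # v) = y + sy v"
  by (simp_all add: sy_def)

definition sx_ind :: "int \<Rightarrow> (int \<times> int) list \<Rightarrow> real" where
  "sx_ind t v = (if sx v = t then 1 else 0)"

lemma sx_ind_Cons: "sx_ind t ((x, y) # v) = sx_ind (t - x - 1) v"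
  by (auto simp: sx_ind_def)

abbreviation Bn :: "nat \<Rightarrow> nat \<Rightarrow> real" where
  "Bn \<equiv> binom_weight (2 * \<alpha>) (2 * \<beta>)"

definition sx_weight :: "nat \<Rightarrow> int \<Rightarrow> real" where
  "sx_weight k t = (if t \<ge> 0 \<and> even t then Bn k (nat (t div 2)) else 0)"

lemma sx_weight_double [simp]: "sx_weight k (2 * int x) = Bn k x"
  by (simp add: sx_weight_def)

lemma sx_weight_Suc: "sx_weight (Suc k) t = 2 * \<alpha> * sx_weight k (t - 2) + 2 * \<beta> * sx_weight k t"
proof (cases "t \<ge> 0 \<and> even t")
  case False
  then show ?thesis by (auto simp: sx_weight_def)
next
  case True
  then obtain x where t: "t = 2 * int x"
    by (metis evenE nonneg_int_cases mult_less_cancel_left_pos zero_less_numeral linorder_not_le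
        mult_zero_right)
  show ?thesis
  proof (cases x)
    case 0
    then show ?thesis by (simp add: sx_weight_def t binom_weight_Suc_0)
  next
    case (Suc x')
    then have "t - 2 = 2 * int x'" using t by simp
    then show ?thesis
      using sx_weight_double[of "Suc k" "Suc x'"] sx_weight_double[of k "Suc x'"] binom_weight_Suc_Suc[of _ _ k x'] t Suc by simp
  qed
qed

lemma expectation_sx_ind: "E (R k) (sx_ind t) = sx_weight k t"
proof (induction k arbitrary: t)
  case 0
  then show ?case by (auto simp: sx_ind_def sx_weight_def binom_weight_def elim!: evenE)
next
  case (Suc k)
  show ?case
    unfolding expectation_R_Suc expectation_xy_pmf
    by (simp only: sx_ind_Cons Suc.IH sx_weight_Suc) (simp add: algebra_simps)
qed

text \<open>The \<open>Y\<close>-steps are symmetric and independent of the \<open>X\<close>-steps, so \<open>sy\<close> is centred on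
  every event \<open>sx = t\<close>.\<close>

lemma expectation_sy_sx_ind: "E (R k) (\<lambda>v. real_of_int (sy v) * sx_ind t v) = 0"
proof (induction k arbitrary: t)
  case 0
  then show ?case by simp
next
  case (Suc k)
  have shift: "E (R k) (\<lambda>v. real_of_int (c + sy v) * sx_ind t v) = real_of_int c * E (R k) (sx_ind t)"
    for c t
    by (simp add: distrib_right integral_add Suc.IH)
  show ?case
    unfolding expectation_R_Suc expectation_xy_pmf
    by (simp only: sy_simps sx_ind_Cons shift) simp
qed

lemma expectation_sy_sq_sx_ind:
  "E (R k) (\<lambda>v. (real_of_int (sy v))\<^sup>2 * sx_ind t v) = real k * E (R k) (sx_ind t)"
proof (induction k arbitrary: t)
  case 0
  then show ?case by simp
next
  case (Suc k)
  have shift: "E (R k) (\<lambda>v. (real_of_int (c + sy v))\<^sup>2 * sx_ind t v) = (1 + real k) * E (R k) (sx_ind t)"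
    if "c = 1 \<or> c = -1" for c t
  proof -
    have "E (R k) (\<lambda>v. (real_of_int (c + sy v))\<^sup>2 * sx_ind t v) =
       E (R k) (\<lambda>v. sx_ind t v + (2 * real_of_int c) * (real_of_int (sy v) * sx_ind t v)
                    + (real_of_int (sy v))\<^sup>2 * sx_ind t v)"
      using that by (auto simp: power2_sum algebra_simps)
    also have "\<dots> = E (R k) (sx_ind t) + (2 * real_of_int c) * E (R k) (\<lambda>v. real_of_int (sy v) * sx_ind t v)
                    + E (R k) (\<lambda>v. (real_of_int (sy v))\<^sup>2 * sx_ind t v)"
      by (simp add: integral_add)
    also have "\<dots> = (1 + real k) * E (R k) (sx_ind t)"
      by (simp only: expectation_sy_sx_ind Suc.IH) (simp add: algebra_simps)
    finally show ?thesis .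
  qed
  have "E (R k) (\<lambda>v. (real_of_int (1 + sy v))\<^sup>2 * sx_ind t v) = (1 + real k) * E (R k) (sx_ind t)"
    and "E (R k) (\<lambda>v. (real_of_int (- 1 + sy v))\<^sup>2 * sx_ind t v) = (1 + real k) * E (R k) (sx_ind t)"
    for t
    by (rule shift, simp)+
  then show ?case
    unfolding expectation_R_Suc expectation_xy_pmf
    by (simp only: sy_simps sx_ind_Cons) (simp add: algebra_simps)
qed

lemma SX_eq_sx: "SX \<omega> = sx (take (K_n (fst \<omega>)) (snd \<omega>))"
  by (simp add: SX_def sx_def)

lemma SY_eq_sy: "SY \<omega> = sy (take (K_n (fst \<omega>)) (snd \<omega>))"
  by (simp add: SY_def sy_def)

lemma expectation_model_SX_event:
  fixes P :: "bool list pmf"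
  assumes finP: "finite (set_pmf P)" and lenP: "\<And>z. z \<in> set_pmf P \<Longrightarrow> length z = n"
  shows "E (pair_pmf P (R n)) (\<lambda>\<omega>. h (take (K_n (fst \<omega>)) (snd \<omega>)) * indicator {\<omega>. SX \<omega> = t} \<omega>)
       = (\<Sum>z\<in>set_pmf P. pmf P z * E (R (K_n z)) (\<lambda>v. h v * sx_ind t v))"
proof -
  have "E (R n) (\<lambda>w. h (take (K_n z) w) * indicator {\<omega>. SX \<omega> = t} (z, w))
      = E (R (K_n z)) (\<lambda>v. h v * sx_ind t v)" if "z \<in> set_pmf P" for z
  proof -
    have "K_n z \<le> n" using lenP[OF that] length_filter_le[of id z] by (simp add: K_n_def)
    moreover have "indicator {\<omega>. SX \<omega> = t} (z, w) = sx_ind t (take (K_n z) w)" for w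
      by (simp add: SX_eq_sx sx_ind_def)
    ultimately show ?thesis using expectation_R_take[of "K_n z" n "\<lambda>v. h v * sx_ind t v"] by simp
  qed
  then show ?thesis by (simp add: expectation_pair_pmf_finite[OF finP finite_set_R])
qed

lemma prob_model_SX:
  fixes P :: "bool list pmf"
  assumes finP: "finite (set_pmf P)" and lenP: "\<And>z. z \<in> set_pmf P \<Longrightarrow> length z = n"
  shows "measure_pmf.prob (pair_pmf P (R n)) {\<omega>. SX \<omega> = 2 * int x}
       = (\<Sum>z\<in>set_pmf P. pmf P z * Bn (K_n z) x)"
proof -
  have "measure_pmf.prob (pair_pmf P (R n)) {\<omega>. SX \<omega> = 2 * int x}
      = E (pair_pmf P (R n)) (\<lambda>\<omega>. 1 * indicator {\<omega>. SX \<omega> = 2 * int x} \<omega>)"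
    by (simp add: measure_pmf.emeasure_eq_measure)
  also have "\<dots> = (\<Sum>z\<in>set_pmf P. pmf P z * Bn (K_n z) x)"
    using expectation_model_SX_event[OF finP lenP, of "\<lambda>_. 1"] by (simp add: expectation_sx_ind)
  finally show ?thesis .
qed

lemma variance_cond_model_SY:
  fixes P :: "bool list pmf"
  assumes finP: "finite (set_pmf P)" and lenP: "\<And>z. z \<in> set_pmf P \<Longrightarrow> length z = n"
    and pos: "measure_pmf.prob (pair_pmf P (R n)) {\<omega>. SX \<omega> = 2 * int x} > 0"
  shows "measure_pmf.variance (cond_pmf (pair_pmf P (R n)) {\<omega>. SX \<omega> = 2 * int x})
           (\<lambda>\<omega>. real_of_int (SY \<omega>))
       = (\<Sum>z\<in>set_pmf P. pmf P z * (real (K_n z) * Bn (K_n z) x))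
           / (\<Sum>z\<in>set_pmf P. pmf P z * Bn (K_n z) x)"
proof -
  define M where "M = pair_pmf P (R n)"
  define A where "A = {\<omega>. SX \<omega> = 2 * int x}"
  have finM: "finite (set_pmf M)" using finP finite_set_R by (simp add: M_def)
  have ne: "set_pmf M \<inter> A \<noteq> {}"
    using pos measure_pmf_zero_iff[of M A] by (auto simp: M_def A_def)
  have "E M (\<lambda>\<omega>. real_of_int (SY \<omega>) * indicator A \<omega>) = 0"
    using expectation_model_SX_event[OF finP lenP, of "\<lambda>v. real_of_int (sy v)"]
    by (simp add: M_def A_def SY_eq_sy expectation_sy_sx_ind)
  then have mean: "E (cond_pmf M A) (\<lambda>\<omega>. real_of_int (SY \<omega>)) = 0"
    by (simp add: expectation_cond_pmf_finite[OF finM ne])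
  have "E M (\<lambda>\<omega>. (real_of_int (SY \<omega>))\<^sup>2 * indicator A \<omega>)
      = (\<Sum>z\<in>set_pmf P. pmf P z * (real (K_n z) * Bn (K_n z) x))"
    using expectation_model_SX_event[OF finP lenP, of "\<lambda>v. (real_of_int (sy v))\<^sup>2"]
    by (simp add: M_def A_def SY_eq_sy expectation_sy_sq_sx_ind expectation_sx_ind)
  then have "E (cond_pmf M A) (\<lambda>\<omega>. (real_of_int (SY \<omega>))\<^sup>2)
      = (\<Sum>z\<in>set_pmf P. pmf P z * (real (K_n z) * Bn (K_n z) x))
          / (\<Sum>z\<in>set_pmf P. pmf P z * Bn (K_n z) x)"
    using prob_model_SX[OF finP lenP, of x]
    by (simp only: expectation_cond_pmf_finite[OF finM ne]) (simp add: M_def A_def)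
  then show ?thesis by (simp add: mean flip: M_def A_def)
qed

end

theorem proposition5:
  fixes lF lA a b \<alpha> \<beta> :: real and n x y :: nat
  assumes "lF \<ge> 0" "lA \<ge> 0" "lF + lA = 1"
    and "0 \<le> a" "a \<le> 1" "0 \<le> b" "b \<le> 1"
    and "\<alpha> \<ge> 0" "\<beta> \<ge> 0" "\<alpha> + \<beta> = 1/2"
    and "n \<ge> 1"
    and "x \<le> y" "y \<le> n"
    and "measure_pmf.prob (model lF a b \<alpha> \<beta> n) {\<omega>. SX \<omega> = 2 * int x} > 0"
    and "measure_pmf.prob (model lF a b \<alpha> \<beta> n) {\<omega>. SX \<omega> = 2 * int y} > 0"
  shows "cond_var_SY lF a b \<alpha> \<beta> n x \<le> cond_var_SY lF a b \<alpha> \<beta> n y"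
proof -
  interpret step_law \<alpha> \<beta> using assms by unfold_locales auto
  define P where "P = markov_path lF a b n"
  have finP: "finite (set_pmf P)" unfolding P_def by (rule finite_set_markov_path)
  have lenP: "\<And>z. z \<in> set_pmf P \<Longrightarrow> length z = n" unfolding P_def by (rule length_markov_path)
  have model: "model lF a b \<alpha> \<beta> n = pair_pmf P (R n)" by (simp add: model_def P_def)
  have px: "measure_pmf.prob (pair_pmf P (R n)) {\<omega>. SX \<omega> = 2 * int x} > 0"
    and py: "measure_pmf.prob (pair_pmf P (R n)) {\<omega>. SX \<omega> = 2 * int y} > 0"
    using assms(14,15) by (simp_all add: model)
  have TP2: "Bn l y * Bn k x \<le> Bn l x * Bn k y" if "l \<le> k" for l k
    using binom_weight_TP2[OF _ _ that \<open>x \<le> y\<close>] assms(8,9) by simp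
  have var: "cond_var_SY lF a b \<alpha> \<beta> n t = (\<Sum>z\<in>set_pmf P. pmf P z * (real (K_n z) * Bn (K_n z) t))
           / (\<Sum>z\<in>set_pmf P. pmf P z * Bn (K_n z) t)"
    if "measure_pmf.prob (pair_pmf P (R n)) {\<omega>. SX \<omega> = 2 * int t} > 0" for t
    unfolding cond_var_SY_def model by (rule variance_cond_model_SY[OF finP lenP that])
  show ?thesis
    unfolding var[OF px] var[OF py]
    using px py by (intro posterior_mean_mono[OF _ TP2]) (simp_all add: prob_model_SX[OF finP lenP])
qed

end
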